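(* Let $\mu$ be a nonzero finite Borel measure on $\mathbb{T}$, and let $\Gamma_1,\Gamma_2,\dots$ be subsets of $\mathbb{T}$ such that each $\Gamma_n$ is a union of intervals of level $n$ (these intervals are called marked). Suppose there is $K>0$ such that for every positive integer $n$ and every interval $I$ of level $n$, $$\mu(I\cap\Gamma_{n+1})\ \ge\ K\,\mu(I).$$ Then for $\mu$-a.e. $x\in\mathbb{T}$ the following holds: for every positive integer $d$ there exists $n\ge 0$ such that the balls $B_{n+1}(x),B_{n+2}(x),\dots,B_{n+d}(x)$ are all marked, i.e. $B_{n+k}(x)\subseteq\Gamma_{n+k}$ for $k=1,\dots,d$.
   Context: Fix an integer $m\ge 2$ and let $\mathbb{T}=\{0,1,\dots,m-1\}^{\mathbb{N}}$ be the set of infinite sequences with entries in $\{0,\dots,m-1\}$, with metric $d(a,b)=m^{-n(a,b)+1}$ where $n(a,b)$ is the first index at which distinct $a,b$ differ. For an integer $n\ge0$ and $x\in\mathbb{T}$, $B_n(x)=B(x,m^{-n})$ is the set of sequences agreeing with $x$ in the first $n$ positions; these sets are the intervals of level $n$, and the intervals of level $n$ partition $\mathbb{T}$. *)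

theory Defs
  imports "HOL-Probability.Probability"
begin

definition seqspace :: "nat \<Rightarrow> (nat \<Rightarrow> nat) set" where
  "seqspace m = {x. \<forall>i. x i < m}"

definition ival :: "nat \<Rightarrow> nat \<Rightarrow> (nat \<Rightarrow> nat) \<Rightarrow> (nat \<Rightarrow> nat) set" where
  "ival m n x = {y \<in> seqspace m. \<forall>i<n. y i = x i}"

definition seq_open :: "nat \<Rightarrow> (nat \<Rightarrow> nat) set \<Rightarrow> bool" where
  "seq_open m U \<longleftrightarrow> U \<subseteq> seqspace m \<and> (\<forall>x\<in>U. \<exists>n. ival m n x \<subseteq> U)"

definition seq_borel :: "nat \<Rightarrow> (nat \<Rightarrow> nat) measure" where
  "seq_borel m = sigma (seqspace m) {U. seq_open m U}"

definition union_of_level :: "nat \<Rightarrow> nat \<Rightarrow> (nat \<Rightarrow> nat) set \<Rightarrow> bool" where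
  "union_of_level m n G \<longleftrightarrow> G \<subseteq> seqspace m \<and> (\<forall>x\<in>G. ival m n x \<subseteq> G)"

end

theory Submission
  imports Defs
begin

text \<open>
  By finite additivity over the intervals of level n, the density hypothesis
  \<open>\<mu>(I \<inter> \<Gamma>\<^sub>n\<^sub>+\<^sub>1) \<ge> K \<mu>(I)\<close> extends from single intervals to every union A of intervals of
  level n; iterating it d times shows that a proportion at least \<open>K\<^sup>d\<close> of A consists of points
  whose balls of levels n+1, ..., n+d are all marked. Hence the points having no such run of
  d marked balls starting at any of the levels 1, 1+d, ..., 1+(j-1)d form a set of measure at
  most \<open>(1 - K\<^sup>d)\<^sup>j \<mu>(\<T>)\<close>, and the points with no run at all form a null set.
\<close>


lemma ival_antimono: "a \<le> b \<Longrightarrow> ival m b x \<subseteq> ival m a x"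
  by (auto simp: ival_def)

lemma ival_eq_if_mem: "y \<in> ival m n x \<Longrightarrow> ival m n y = ival m n x"
  by (auto simp: ival_def)

lemma mem_ival_self: "x \<in> seqspace m \<Longrightarrow> x \<in> ival m n x"
  by (auto simp: ival_def)

lemma finite_ivals: "finite (ival m n ` seqspace m)"
proof -
  have "ival m n ` seqspace m \<subseteq> ival m n ` ({..<n} \<rightarrow>\<^sub>E {..<m})"
  proof
    fix I assume "I \<in> ival m n ` seqspace m"
    then obtain x where x: "x \<in> seqspace m" and I: "I = ival m n x" by blast
    have "I = ival m n (restrict x {..<n})"
      unfolding I by (auto simp: ival_def)
    moreover have "restrict x {..<n} \<in> {..<n} \<rightarrow>\<^sub>E {..<m}"
      using x by (auto simp: seqspace_def)
    ultimately show "I \<in> ival m n ` ({..<n} \<rightarrow>\<^sub>E {..<m})" by blast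
  qed
  then show ?thesis
    by (rule finite_subset) (intro finite_imageI finite_PiE; simp)
qed

lemma union_of_level_seqspace: "union_of_level m n (seqspace m)"
  by (auto simp: union_of_level_def ival_def)

lemma union_of_level_ival: "union_of_level m n (ival m n x)"
  by (auto simp: union_of_level_def ival_def)

lemma union_of_level_mono: "union_of_level m a G \<Longrightarrow> a \<le> b \<Longrightarrow> union_of_level m b G"
  unfolding union_of_level_def using ival_antimono by blast

lemma union_of_level_Int:
  "union_of_level m n A \<Longrightarrow> union_of_level m n B \<Longrightarrow> union_of_level m n (A \<inter> B)"
  unfolding union_of_level_def by blast

lemma union_of_level_Diff:
  assumes A: "union_of_level m n A" and B: "union_of_level m n B"
  shows "union_of_level m n (A - B)"
  unfolding union_of_level_def
proof safe
  fix x y assume x: "x \<in> A" "x \<notin> B" and y: "y \<in> ival m n x"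
  show "y \<in> A" using A x y by (auto simp: union_of_level_def)
  assume "y \<in> B"
  then have "ival m n x \<subseteq> B"
    using B ival_eq_if_mem[OF y] by (auto simp: union_of_level_def)
  moreover have "x \<in> ival m n x"
    using A x mem_ival_self by (auto simp: union_of_level_def)
  ultimately show False using x by blast
qed (use A in \<open>auto simp: union_of_level_def\<close>)

lemma union_of_level_eq_Union_ivals:
  "union_of_level m n A \<Longrightarrow> A = \<Union>(ival m n ` A)"
  unfolding union_of_level_def using mem_ival_self by blast

lemma space_seq_borel: "space (seq_borel m) = seqspace m"
  by (simp add: seq_borel_def space_measure_of_conv)

lemma sets_seq_borel_if_union_of_level:
  assumes "union_of_level m n G"
  shows "G \<in> sets (seq_borel m)"
proof -
  have "seq_open m G"
    using assms unfolding union_of_level_def seq_open_def by blast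
  moreover have "{U. seq_open m U} \<subseteq> Pow (seqspace m)"
    by (auto simp: seq_open_def)
  ultimately show ?thesis
    unfolding seq_borel_def by (auto simp: sets_measure_of intro: sigma_sets.Basic)
qed

lemma measure_Int_ge_if_ivals:
  fixes M :: "(nat \<Rightarrow> nat) measure"
  assumes "finite_measure M" and sets_eq: "sets M = sets (seq_borel m)"
    and A: "union_of_level m n A" and \<Gamma>: "\<Gamma> \<in> sets M"
    and density: "\<And>x. x \<in> A \<Longrightarrow> c * measure M (ival m n x) \<le> measure M (ival m n x \<inter> \<Gamma>)"
  shows "c * measure M A \<le> measure M (A \<inter> \<Gamma>)"
proof -
  interpret finite_measure M by fact
  define S where "S = ival m n ` A"
  have A_space: "A \<subseteq> seqspace m"
    using A by (simp add: union_of_level_def)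
  have "finite S"
    unfolding S_def using finite_ivals finite_subset image_mono[OF A_space] by blast
  have S_sets: "S \<subseteq> sets M"
    using union_of_level_ival sets_seq_borel_if_union_of_level sets_eq
    unfolding S_def by blast
  have S_disjoint: "disjoint_family_on (\<lambda>I. I) S"
    unfolding disjoint_family_on_def S_def by (metis disjoint_iff image_iff ival_eq_if_mem)
  have A_eq: "A = (\<Union>I\<in>S. I)"
    unfolding S_def using union_of_level_eq_Union_ivals[OF A] by simp
  have "c * measure M A = (\<Sum>I\<in>S. c * measure M I)"
    unfolding A_eq sum_distrib_left[symmetric]
    by (subst finite_measure_finite_Union) (use \<open>finite S\<close> S_sets S_disjoint in auto)
  also have "\<dots> \<le> (\<Sum>I\<in>S. measure M (I \<inter> \<Gamma>))"
    by (rule sum_mono) (auto simp: S_def density)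
  also have "\<dots> = measure M (A \<inter> \<Gamma>)"
    unfolding A_eq UN_extend_simps(4)
    by (subst finite_measure_finite_Union)
      (use \<open>finite S\<close> S_sets S_disjoint \<Gamma> in \<open>auto simp: disjoint_family_on_def\<close>)
  finally show ?thesis .
qed

lemma (in finite_measure) null_sets_if_measure_le_power:
  assumes "N \<in> sets M" and le: "\<And>j. measure M N \<le> q ^ j * C" and "\<bar>q\<bar> < 1"
  shows "N \<in> null_sets M"
proof -
  have "(\<lambda>j. q ^ j * C) \<longlonglongrightarrow> 0"
    using LIMSEQ_power_zero[of q] \<open>\<bar>q\<bar> < 1\<close> by (auto intro: tendsto_mult_left_zero)
  then have "measure M N \<le> 0"
    by (rule LIMSEQ_le_const) (use le in auto)
  then show ?thesis
    using \<open>N \<in> sets M\<close> emeasure_eq_measure measure_nonneg[of M N] by auto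
qed

definition marked_block ::
    "nat \<Rightarrow> (nat \<Rightarrow> (nat \<Rightarrow> nat) set) \<Rightarrow> nat \<Rightarrow> nat \<Rightarrow> (nat \<Rightarrow> nat) set" where
  "marked_block m \<Gamma> n d = {x \<in> seqspace m. \<forall>k\<in>{1..d}. ival m (n + k) x \<subseteq> \<Gamma> (n + k)}"

definition no_marked_block ::
    "nat \<Rightarrow> (nat \<Rightarrow> (nat \<Rightarrow> nat) set) \<Rightarrow> nat \<Rightarrow> nat \<Rightarrow> (nat \<Rightarrow> nat) set" where
  "no_marked_block m \<Gamma> d j = {x \<in> seqspace m. \<forall>i<j. x \<notin> marked_block m \<Gamma> (1 + i * d) d}"

lemma marked_block_0: "marked_block m \<Gamma> n 0 = seqspace m"
  by (simp add: marked_block_def)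

lemma marked_block_Suc:
  assumes "union_of_level m (n + Suc d) (\<Gamma> (n + Suc d))"
  shows "marked_block m \<Gamma> n (Suc d) = marked_block m \<Gamma> n d \<inter> \<Gamma> (n + Suc d)"
proof -
  have "{1..Suc d} = insert (Suc d) {1..d}" by auto
  then show ?thesis
    using assms mem_ival_self unfolding marked_block_def union_of_level_def by auto
qed

lemma union_of_level_marked_block: "union_of_level m (n + d) (marked_block m \<Gamma> n d)"
  unfolding union_of_level_def
proof (intro conjI ballI subsetI)
  fix x y assume x: "x \<in> marked_block m \<Gamma> n d" and y: "y \<in> ival m (n + d) x"
  have same_ival: "ival m (n + k) y = ival m (n + k) x" if "k \<in> {1..d}" for k
  proof (rule ival_eq_if_mem)
    show "y \<in> ival m (n + k) x"
      using y ival_antimono[of "n + k" "n + d" m x] that by auto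
  qed
  have "y \<in> seqspace m"
    using y by (simp add: ival_def)
  then show "y \<in> marked_block m \<Gamma> n d"
    using x same_ival by (simp add: marked_block_def)
qed (simp add: marked_block_def)

lemma no_marked_block_0: "no_marked_block m \<Gamma> d 0 = seqspace m"
  by (simp add: no_marked_block_def)

lemma no_marked_block_Suc:
  "no_marked_block m \<Gamma> d (Suc j) = no_marked_block m \<Gamma> d j - marked_block m \<Gamma> (1 + j * d) d"
  by (auto simp: no_marked_block_def less_Suc_eq)

lemma union_of_level_no_marked_block:
  "union_of_level m (1 + j * d) (no_marked_block m \<Gamma> d j)"
proof (induction j)
  case 0
  show ?case by (simp add: no_marked_block_0 union_of_level_seqspace)
next
  case (Suc j)
  have "union_of_level m (1 + j * d + d) (no_marked_block m \<Gamma> d j)"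
    using Suc.IH union_of_level_mono le_add1 by blast
  then have "union_of_level m (1 + j * d + d) (no_marked_block m \<Gamma> d (Suc j))"
    unfolding no_marked_block_Suc by (intro union_of_level_Diff union_of_level_marked_block)
  then show ?case by (simp add: add.commute add.left_commute)
qed

locale marked_measure = finite_measure \<mu> for \<mu> :: "(nat \<Rightarrow> nat) measure" +
  fixes m :: nat and \<Gamma> :: "nat \<Rightarrow> (nat \<Rightarrow> nat) set" and K :: real
  assumes sets_eq: "sets \<mu> = sets (seq_borel m)"
    and \<Gamma>_level: "\<And>n. n \<ge> 1 \<Longrightarrow> union_of_level m n (\<Gamma> n)"
    and K_pos: "K > 0"
    and density: "\<And>n x. n \<ge> 1 \<Longrightarrow> x \<in> seqspace m \<Longrightarrow>
           measure \<mu> (ival m n x \<inter> \<Gamma> (n + 1)) \<ge> K * measure \<mu> (ival m n x)"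
begin

lemma space_eq: "space \<mu> = seqspace m"
  using sets_eq_imp_space_eq[OF sets_eq] by (simp add: space_seq_borel)

lemma sets_if_union_of_level: "union_of_level m n G \<Longrightarrow> G \<in> sets \<mu>"
  using sets_eq sets_seq_borel_if_union_of_level by blast

lemma measure_Int_marked_block_ge:
  assumes "n \<ge> 1" and A: "union_of_level m n A"
  shows "K ^ d * measure \<mu> A \<le> measure \<mu> (A \<inter> marked_block m \<Gamma> n d)"
proof (induction d)
  case 0
  have "A \<inter> marked_block m \<Gamma> n 0 = A"
    using A by (auto simp: marked_block_0 union_of_level_def)
  then show ?case by simp
next
  case (Suc d)
  have "union_of_level m (n + d) A"
    using A by (rule union_of_level_mono) simp
  then have A_d: "union_of_level m (n + d) (A \<inter> marked_block m \<Gamma> n d)"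
    using union_of_level_marked_block by (rule union_of_level_Int)
  have "K ^ Suc d * measure \<mu> A \<le> K * measure \<mu> (A \<inter> marked_block m \<Gamma> n d)"
    using Suc.IH K_pos by simp
  also have "\<dots> \<le> measure \<mu> ((A \<inter> marked_block m \<Gamma> n d) \<inter> \<Gamma> (n + d + 1))"
  proof (rule measure_Int_ge_if_ivals[OF finite_measure_axioms sets_eq A_d])
    show "\<Gamma> (n + d + 1) \<in> sets \<mu>"
      using \<Gamma>_level[of "n + d + 1"] by (simp add: sets_if_union_of_level)
    show "K * measure \<mu> (ival m (n + d) x) \<le> measure \<mu> (ival m (n + d) x \<inter> \<Gamma> (n + d + 1))"
      if "x \<in> A \<inter> marked_block m \<Gamma> n d" for x
      using that A_d \<open>n \<ge> 1\<close> by (intro density) (auto simp: union_of_level_def)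
  qed
  also have "\<dots> = measure \<mu> (A \<inter> marked_block m \<Gamma> n (Suc d))"
    using \<Gamma>_level[of "n + Suc d"] by (simp add: marked_block_Suc Int_assoc)
  finally show ?case .
qed

lemma measure_no_marked_block_le:
  "measure \<mu> (no_marked_block m \<Gamma> d j) \<le> max 0 (1 - K ^ d) ^ j * measure \<mu> (space \<mu>)"
proof (induction j)
  case 0
  show ?case by (simp add: no_marked_block_0 space_eq)
next
  case (Suc j)
  let ?F = "no_marked_block m \<Gamma> d j" and ?B = "marked_block m \<Gamma> (1 + j * d) d"
  have F_level: "union_of_level m (1 + j * d) ?F"
    by (rule union_of_level_no_marked_block)
  have "measure \<mu> (no_marked_block m \<Gamma> d (Suc j)) = measure \<mu> ?F - measure \<mu> (?F \<inter> ?B)"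
    unfolding no_marked_block_Suc
    using F_level union_of_level_marked_block by (intro finite_measure_Diff' sets_if_union_of_level)
  also have "\<dots> \<le> (1 - K ^ d) * measure \<mu> ?F"
    using measure_Int_marked_block_ge[OF _ F_level, of d] by (simp add: algebra_simps)
  also have "\<dots> \<le> max 0 (1 - K ^ d) * (max 0 (1 - K ^ d) ^ j * measure \<mu> (space \<mu>))"
    using Suc.IH by (intro mult_mono) auto
  finally show ?case by simp
qed

lemma AE_marked_block: "AE x in \<mu>. \<exists>n. x \<in> marked_block m \<Gamma> n d"
proof -
  define N where "N = (\<Inter>j. no_marked_block m \<Gamma> d j)"
  have N_sets: "N \<in> sets \<mu>"
    unfolding N_def using sets_if_union_of_level union_of_level_no_marked_block by blast
  have "measure \<mu> N \<le> max 0 (1 - K ^ d) ^ j * measure \<mu> (space \<mu>)" for j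
  proof -
    have "measure \<mu> N \<le> measure \<mu> (no_marked_block m \<Gamma> d j)"
      using N_sets sets_if_union_of_level[OF union_of_level_no_marked_block]
      by (intro finite_measure_mono) (auto simp: N_def)
    then show ?thesis
      using measure_no_marked_block_le by (rule order_trans)
  qed
  moreover have "\<bar>max 0 (1 - K ^ d)\<bar> < 1"
    using K_pos by simp
  ultimately have "N \<in> null_sets \<mu>"
    using N_sets null_sets_if_measure_le_power by blast
  then show ?thesis
    by (rule AE_I') (auto simp: N_def no_marked_block_def space_eq)
qed

end

theorem lemma2:
  fixes m :: nat and \<mu> :: "(nat \<Rightarrow> nat) measure"
    and \<Gamma> :: "nat \<Rightarrow> (nat \<Rightarrow> nat) set" and K :: real
  assumes "m \<ge> 2"
    and "sets \<mu> = sets (seq_borel m)"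
    and "finite_measure \<mu>"
    and "emeasure \<mu> (space \<mu>) \<noteq> 0"
    and "\<And>n. n \<ge> 1 \<Longrightarrow> union_of_level m n (\<Gamma> n)"
    and "K > 0"
    and "\<And>n x. n \<ge> 1 \<Longrightarrow> x \<in> seqspace m \<Longrightarrow>
           measure \<mu> (ival m n x \<inter> \<Gamma> (n + 1)) \<ge> K * measure \<mu> (ival m n x)"
  shows "AE x in \<mu>. \<forall>d::nat. d \<ge> 1 \<longrightarrow>
           (\<exists>n::nat. \<forall>k\<in>{1..d}. ival m (n + k) x \<subseteq> \<Gamma> (n + k))"
proof -
  interpret marked_measure \<mu> m \<Gamma> K
    using assms(2,3,5-7) by (simp add: marked_measure_def marked_measure_axioms_def)
  have "AE x in \<mu>. \<forall>d. \<exists>n. x \<in> marked_block m \<Gamma> n d"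
    using AE_marked_block by (subst AE_all_countable) blast
  then show ?thesis
    by eventually_elim (auto simp: marked_block_def)
qed

end
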